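(* Let $P_n(x)=\sum_{k=0}^{n}\frac{(q^{-n},q^{n+1};q)_k\,(q(1+(q-1)x);q)_k\,q^k}{(q,q,q;q)_k}$ for $n\ge 0$ (this is the $q$-Hahn type family ${}_3\phi_2\!\left(q^{-n},q^{c+d+n+1},q(1+(q-1)x);q^{c+1},q^{d+1};q,q\right)$ with $c=d=0$). Then the $q$-Bernoulli–Carlitz numbers $(\beta_n)_{n\ge0}$ are the moments of the orthogonal polynomials $(P_n)_{n\ge 0}$.
   Context: $q$ is an indeterminate; we work over $\mathbb{Q}(q)$. The $q$-Bernoulli–Carlitz numbers $\beta_n\in\mathbb{Q}(q)$ are defined by: for all $n\ge0$, $q\sum_{k=0}^{n}\binom{n}{k}q^k\beta_k-\beta_n$ equals $q-1$ if $n=0$, $1$ if $n=1$, and $0$ if $n>1$ (so $\beta_0=1$, $\beta_1=-1/(q+1)$). The $q$-Pochhammer symbol is $(a;q)_k=(1-a)(1-qa)\cdots(1-q^{k-1}a)$ and $(a_1,\dots,a_r;q)_k=\prod_i(a_i;q)_k$. A sequence $(m_n)_{n\ge0}$ with $m_0=1$ is called the sequence of moments of a family of polynomials $(P_n)_{n\ge0}$ ($\deg P_n=n$) if the linear functional $L$ on $\mathbb{Q}(q)[x]$ with $L(x^n)=m_n$ makes the family orthogonal: $L(P_mP_n)=0$ for $m\ne n$ and $L(P_n^2)\neq0$. *)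

theory Defs
  imports "HOL-Computational_Algebra.Polynomial" "HOL-Computational_Algebra.Fraction_Field"
begin

type_synonym qrat = "rat poly fract"

definition qv :: qrat where
  "qv = Fract [:0, 1:] 1"

definition qpoch :: "'a::comm_ring_1 \<Rightarrow> 'a \<Rightarrow> nat \<Rightarrow> 'a" where
  "qpoch a b k = (\<Prod>j<k. 1 - b ^ j * a)"

definition bc_rhs :: "nat \<Rightarrow> qrat" where
  "bc_rhs n = (if n = 0 then qv - 1 else if n = 1 then 1 else 0)"

text \<open>q-Bernoulli-Carlitz numbers: the relation
  q * sum_{k=0}^n C(n,k) q^k beta_k - beta_n = bc_rhs n
  solved for beta_n (the coefficient of beta_n is q^(n+1) - 1, nonzero).\<close>
fun bc_beta :: "nat \<Rightarrow> qrat" where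
  "bc_beta n = (bc_rhs n - qv * (\<Sum>k<n. of_nat (n choose k) * qv ^ k * bc_beta k))
                / (qv ^ (n + 1) - 1)"

declare bc_beta.simps [simp del]

definition moment_functional :: "(nat \<Rightarrow> 'a::comm_ring_1) \<Rightarrow> 'a poly \<Rightarrow> 'a" where
  "moment_functional m p = (\<Sum>i\<le>degree p. coeff p i * m i)"

definition is_moment_sequence :: "(nat \<Rightarrow> 'a::field) \<Rightarrow> (nat \<Rightarrow> 'a poly) \<Rightarrow> bool" where
  "is_moment_sequence m P \<longleftrightarrow>
     m 0 = 1 \<and> (\<forall>n. degree (P n) = n) \<and>
     (\<forall>i j. i \<noteq> j \<longrightarrow> moment_functional m (P i * P j) = 0) \<and>
     (\<forall>n. moment_functional m (P n * P n) \<noteq> 0)"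

definition Pfam :: "nat \<Rightarrow> qrat poly" where
  "Pfam n = (\<Sum>k = 0..n.
     smult (qpoch (inverse (qv ^ n)) qv k * qpoch (qv ^ (n + 1)) qv k * qv ^ k
              / (qpoch qv qv k) ^ 3)
           (qpoch ([:qv:] * [:1, qv - 1:]) [:qv:] k))"

end

theory Submission
  imports Defs
begin

text \<open>
  The functional L with L(x^n) = \<beta>_n is characterised by the defining relation of the numbers,
  L(q f(1 + qx) - f(x)) = (q - 1) f(0) + f'(0). The substitution x \<mapsto> 1 + qx multiplies
  z = q(1 + (q - 1)x) by q, so on the basis \<phi>_k = (z; q)_k this relation becomes a first-order
  recurrence with solution L(\<phi>_k) = (1 - q)(q; q)_k / (1 - q^(k+1)). The partial sums of the
  terminating series L(P_n) = \<Sigma>_k c_k L(\<phi>_k) have a closed form containing (q^-n; q)_K,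
  so L(P_n) = 0 for n \<ge> 1.

  Contiguous relations between the coefficients c_k of P_(n-1), P_n, P_(n+1), regarded as
  rational functions of a = q^n, give a three-term recurrence
  x P_n = \<alpha>_n P_(n+1) + \<beta>'_n P_n + \<gamma>_n P_(n-1) with \<alpha>_n \<noteq> 0 and \<gamma>_n \<noteq> 0 for n \<ge> 1.
  As in Favard's theorem, a functional annihilating every P_n with n \<ge> 1 is then
  orthogonal for such a family, by induction on the power of x.
\<close>

section \<open>Moment functionals of families with a three-term recurrence\<close>

lemma moment_functional_eq_sum_atMost:
  assumes "degree p \<le> N"
  shows "moment_functional m p = (\<Sum>i\<le>N. coeff p i * m i)"
  unfolding moment_functional_def
  by (rule sum.mono_neutral_left) (use assms in \<open>auto simp: coeff_eq_0\<close>)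

lemma moment_functional_add:
  "moment_functional m (p + r) = moment_functional m p + moment_functional m r"
proof -
  let ?N = "max (degree p) (degree r)"
  have "degree (p + r) \<le> ?N"
    by (rule degree_add_le) auto
  then show ?thesis
    by (simp add: moment_functional_eq_sum_atMost[of _ ?N] sum.distrib algebra_simps)
qed

lemma moment_functional_smult:
  "moment_functional m (smult c p) = c * moment_functional m p"
  using degree_smult_le[of c p]
  by (simp add: moment_functional_eq_sum_atMost[of _ "degree p"] sum_distrib_left mult.assoc)

lemma moment_functional_diff:
  "moment_functional m (p - r) = moment_functional m p - moment_functional m r"
  using moment_functional_add[of m p "-r"] moment_functional_smult[of m "-1" r] by simp

lemma moment_functional_0: "moment_functional m 0 = 0"
  by (simp add: moment_functional_def)

lemma moment_functional_sum:
  "moment_functional m (\<Sum>i\<in>A. f i) = (\<Sum>i\<in>A. moment_functional m (f i))"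
  by (induction A rule: infinite_finite_induct)
    (simp_all add: moment_functional_add moment_functional_0)

lemma moment_functional_monom: "moment_functional m (monom c i) = c * m i"
proof -
  have "moment_functional m (monom c i) = (\<Sum>j\<le>i. coeff (monom c i) j * m j)"
    using degree_monom_le by (rule moment_functional_eq_sum_atMost)
  also have "\<dots> = c * m i"
    by (subst sum.remove[of _ i]) (auto simp: coeff_monom)
  finally show ?thesis .
qed

lemma moment_functional_X_power: "moment_functional m ([:0, 1:] ^ i) = m i"
  using moment_functional_monom[of m 1 i] by (simp add: monom_altdef)

lemma moment_functional_1: "moment_functional m 1 = m 0"
  using moment_functional_X_power[of m 0] by simp

lemma moment_functional_mult_eq_sum:
  "moment_functional m (p * r) = (\<Sum>t\<le>degree p. coeff p t * moment_functional m ([:0, 1:] ^ t * r))"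
proof -
  have "p * r = (\<Sum>t\<le>degree p. smult (coeff p t) ([:0, 1:] ^ t * r))"
    by (subst poly_as_sum_of_monoms[of p, symmetric]) (simp add: monom_altdef sum_distrib_right)
  then show ?thesis
    by (simp add: moment_functional_sum moment_functional_smult)
qed

context
  fixes m :: "nat \<Rightarrow> 'a::field" and P :: "nat \<Rightarrow> 'a poly" and \<alpha> \<beta> \<gamma> :: "nat \<Rightarrow> 'a"
  assumes m_0: "m 0 = 1" and P_0: "P 0 = 1"
    and annihilates: "\<And>n. n \<ge> 1 \<Longrightarrow> moment_functional m (P n) = 0"
    and three_term: "\<And>n. [:0, 1:] * P n
          = smult (\<alpha> n) (P (Suc n)) + smult (\<beta> n) (P n) + smult (\<gamma> n) (P (n - 1))"
    and \<alpha>_nonzero: "\<And>n. \<alpha> n \<noteq> 0" and \<gamma>_nonzero: "\<And>n. n \<ge> 1 \<Longrightarrow> \<gamma> n \<noteq> 0"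
begin

private abbreviation "\<L> \<equiv> moment_functional m"

private lemma moment_functional_X_power_Suc_mult:
  "\<L> ([:0, 1:] ^ Suc j * P n)
     = \<alpha> n * \<L> ([:0, 1:] ^ j * P (Suc n)) + \<beta> n * \<L> ([:0, 1:] ^ j * P n)
       + \<gamma> n * \<L> ([:0, 1:] ^ j * P (n - 1))"
proof -
  have "[:0, 1:] ^ Suc j * P n = [:0, 1:] ^ j * ([:0, 1:] * P n)"
    by (simp add: mult.assoc)
  then show ?thesis
    unfolding three_term
    by (simp only: distrib_left mult_smult_right moment_functional_add moment_functional_smult)
qed

lemma moment_functional_X_power_mult_eq_0:
  "j < n \<Longrightarrow> \<L> ([:0, 1:] ^ j * P n) = 0"
proof (induction j arbitrary: n)
  case 0
  then show ?case by (simp add: annihilates)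
next
  case (Suc j)
  then show ?case
    unfolding moment_functional_X_power_Suc_mult by simp
qed

lemma moment_functional_X_power_mult_nonzero: "\<L> ([:0, 1:] ^ n * P n) \<noteq> 0"
proof (induction n)
  case 0
  then show ?case by (simp add: P_0 m_0 moment_functional_1)
next
  case (Suc n)
  have "\<L> ([:0, 1:] ^ Suc n * P (Suc n)) = \<gamma> (Suc n) * \<L> ([:0, 1:] ^ n * P n)"
    unfolding moment_functional_X_power_Suc_mult by (simp add: moment_functional_X_power_mult_eq_0)
  with Suc \<gamma>_nonzero[of "Suc n"] show ?case by simp
qed

lemma three_term_family_nonzero: "P n \<noteq> 0"
  using moment_functional_X_power_mult_nonzero[of n] by (auto simp: moment_functional_0)

lemma degree_three_term_family: "degree (P n) = n"
proof (induction n rule: less_induct)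
  case (less n)
  show ?case
  proof (cases n)
    case 0
    then show ?thesis by (simp add: P_0)
  next
    case (Suc k)
    from less Suc three_term_family_nonzero[of k] have "degree ([:0, 1:] * P k) = Suc k"
      by simp
    moreover have "degree (smult (\<beta> k) (P k) + smult (\<gamma> k) (P (k - 1))) \<le> k"
      using less[of k] less[of "k - 1"] Suc
      by (intro degree_add_le order.trans[OF degree_smult_le]) auto
    ultimately have "degree ([:0, 1:] * P k - (smult (\<beta> k) (P k) + smult (\<gamma> k) (P (k - 1)))) = Suc k"
      by (simp only: diff_conv_add_uminus degree_add_eq_left degree_minus)
    moreover have "smult (\<alpha> k) (P (Suc k))
        = [:0, 1:] * P k - (smult (\<beta> k) (P k) + smult (\<gamma> k) (P (k - 1)))"
      using three_term[of k] by (simp add: algebra_simps)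
    ultimately have "degree (smult (\<alpha> k) (P (Suc k))) = Suc k"
      by simp
    with Suc \<alpha>_nonzero show ?thesis by simp
  qed
qed

lemma moment_functional_mult_eq_0:
  assumes "i < j"
  shows "\<L> (P i * P j) = 0"
  using assms
  by (simp add: moment_functional_mult_eq_sum[of m "P i"] degree_three_term_family
      moment_functional_X_power_mult_eq_0)

lemma is_moment_sequence_three_term: "is_moment_sequence m P"
  unfolding is_moment_sequence_def
proof (intro conjI allI impI)
  fix i j :: nat
  assume "i \<noteq> j"
  then show "\<L> (P i * P j) = 0"
    by (metis linorder_neqE_nat moment_functional_mult_eq_0 mult.commute)
next
  fix n
  have "\<L> (P n * P n) = coeff (P n) n * \<L> ([:0, 1:] ^ n * P n)"
    unfolding moment_functional_mult_eq_sum[of m "P n"] degree_three_term_family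
    by (subst sum.remove[of _ n]) (auto intro!: sum.neutral simp: moment_functional_X_power_mult_eq_0)
  moreover have "coeff (P n) n \<noteq> 0"
    using three_term_family_nonzero[of n] degree_three_term_family[of n] by (metis leading_coeff_0_iff)
  ultimately show "\<L> (P n * P n) \<noteq> 0"
    using moment_functional_X_power_mult_nonzero[of n] by simp
qed (use m_0 degree_three_term_family in auto)

end

section \<open>The functional of the q-Bernoulli-Carlitz numbers\<close>

lemma qv_power: "qv ^ m = Fract (monom 1 m) 1"
  by (induction m) (auto simp: qv_def One_fract_def monom_Suc mult.commute)

lemma qv_nonzero: "qv \<noteq> 0"
  by (simp add: qv_def eq_fract Zero_fract_def)

lemma qv_power_eq_1_iff: "qv ^ m = 1 \<longleftrightarrow> m = 0"
proof
  assume "qv ^ m = 1"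
  then have "monom (1::rat) m = 1"
    by (simp add: qv_power One_fract_def eq_fract)
  then show "m = 0"
    by (metis degree_1 degree_monom_eq one_neq_zero)
qed simp

lemma qv_power_neq_minus_1: "qv ^ m \<noteq> - 1"
proof
  assume "qv ^ m = - 1"
  then have "monom (1::rat) m = - 1"
    by (simp add: qv_power One_fract_def eq_fract)
  then have "coeff (monom (1::rat) m) m = coeff (- 1) m"
    by simp
  then show False
    by (cases m) auto
qed

lemma qv_neq_1: "qv \<noteq> 1"
  using qv_power_eq_1_iff[of 1] by simp

lemma qpoch_0 [simp]: "qpoch a b 0 = 1"
  by (simp add: qpoch_def)

lemma qpoch_Suc: "qpoch a b (Suc k) = qpoch a b k * (1 - b ^ k * a)"
  by (simp add: qpoch_def)

lemma qpoch_Suc_shift: "qpoch a b (Suc k) = (1 - a) * qpoch (b * a) b k"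
  by (induction k) (simp_all add: qpoch_Suc mult_ac)

lemma qpoch_Suc_Suc: "qpoch x b (Suc (Suc j)) = qpoch x b j * (1 - b ^ j * x) * (1 - b ^ Suc j * x)"
  by (simp add: qpoch_Suc)

lemma qpoch_Suc_Suc_shift: "qpoch x b (Suc (Suc j)) = (1 - x) * qpoch (b * x) b j * (1 - b ^ j * (b * x))"
  by (subst qpoch_Suc_shift) (simp add: qpoch_Suc mult_ac)

lemma qpoch_Suc_Suc_shift2: "qpoch x b (Suc (Suc j)) = (1 - x) * (1 - b * x) * qpoch (b * (b * x)) b j"
  by (simp add: qpoch_Suc_shift)

lemma qpoch_qv_qv_nonzero: "qpoch qv qv k \<noteq> 0"
  by (auto simp: qpoch_def) (metis power_Suc2 qv_power_eq_1_iff nat.distinct(1))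

lemma qpoch_inverse_qv_power_eq_0: "n < k \<Longrightarrow> qpoch (inverse (qv ^ n)) qv k = 0"
  unfolding qpoch_def using qv_nonzero by (intro prod_zero bexI[of _ n]) auto

abbreviation L :: "qrat poly \<Rightarrow> qrat" where
  "L \<equiv> moment_functional bc_beta"

lemma bc_beta_recurrence: "qv * L ([:1, qv:] ^ i) - bc_beta i = bc_rhs i"
proof -
  have "degree ([:1, qv:] ^ i) \<le> i"
    by (rule order.trans[OF degree_power_le]) simp
  then have "L ([:1, qv:] ^ i) = (\<Sum>k\<le>i. of_nat (i choose k) * qv ^ k * bc_beta k)"
    by (simp add: moment_functional_eq_sum_atMost coeff_linear_poly_power)
  also have "\<dots> = (\<Sum>k<i. of_nat (i choose k) * qv ^ k * bc_beta k) + qv ^ i * bc_beta i"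
    by (simp add: lessThan_Suc_atMost[symmetric])
  finally have "L ([:1, qv:] ^ i)
      = (\<Sum>k<i. of_nat (i choose k) * qv ^ k * bc_beta k) + qv ^ i * bc_beta i" .
  moreover have "bc_beta i * (qv ^ (i + 1) - 1)
      = bc_rhs i - qv * (\<Sum>k<i. of_nat (i choose k) * qv ^ k * bc_beta k)"
    using qv_power_eq_1_iff[of "i + 1"] by (subst bc_beta.simps) simp
  ultimately show ?thesis
    by (simp add: algebra_simps)
qed

lemma bc_beta_0: "bc_beta 0 = 1"
  using qv_neq_1 by (simp add: bc_beta.simps[of 0] bc_rhs_def)

lemma pcompose_X_power: "pcompose ([:0, 1:] ^ i) r = r ^ i"
  by (induction i) (simp_all add: pcompose_mult pcompose_pCons pcompose_1)

lemma smult_sum_right: "smult c (\<Sum>i\<in>A. f i) = (\<Sum>i\<in>A. smult c (f i))"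
  by (induction A rule: infinite_finite_induct) (auto simp: smult_add_right)

lemma L_functional_equation:
  "L (smult qv (pcompose f [:1, qv:]) - f) = (qv - 1) * coeff f 0 + coeff f 1"
proof -
  let ?N = "degree f"
  have f: "f = (\<Sum>i\<le>?N. smult (coeff f i) ([:0, 1:] ^ i))"
    using poly_as_sum_of_monoms[of f] by (simp add: monom_altdef)
  have "smult qv (pcompose f [:1, qv:]) - f
      = (\<Sum>i\<le>?N. smult (coeff f i) (smult qv ([:1, qv:] ^ i) - [:0, 1:] ^ i))"
    by (subst (1 2) f) (simp add: pcompose_sum pcompose_smult pcompose_X_power smult_sum_right
        sum_subtractf smult_diff_right algebra_simps)
  then have "L (smult qv (pcompose f [:1, qv:]) - f) = (\<Sum>i\<le>?N. coeff f i * bc_rhs i)"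
    by (simp add: moment_functional_sum moment_functional_smult moment_functional_diff
        moment_functional_X_power bc_beta_recurrence[symmetric])
  also have "\<dots> = (\<Sum>i\<le>?N. (if i = 0 then (qv - 1) * coeff f i else 0)
      + (if i = 1 then coeff f i else 0))"
    by (intro sum.cong) (auto simp: bc_rhs_def)
  also have "\<dots> = (qv - 1) * coeff f 0 + coeff f 1"
    by (simp add: sum.distrib coeff_eq_0)
  finally show ?thesis .
qed

section \<open>The basis \<phi>_k and the vanishing of L(P_n)\<close>

definition zvar :: "qrat poly" where
  "zvar = [:qv:] * [:1, qv - 1:]"

definition zpoch :: "nat \<Rightarrow> qrat poly" where
  "zpoch k = qpoch zvar [:qv:] k"

lemma zvar_eq: "zvar = [:qv, qv * (qv - 1):]"
  by (simp add: zvar_def)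

lemma zpoch_0 [simp]: "zpoch 0 = 1"
  by (simp add: zpoch_def)

lemma zpoch_Suc: "zpoch (Suc k) = zpoch k * (1 - smult (qv ^ k) zvar)"
  by (simp add: zpoch_def qpoch_Suc poly_const_pow)

lemma coeff_zpoch_0: "coeff (zpoch k) 0 = qpoch qv qv k"
  by (induction k) (simp_all add: zpoch_Suc coeff_mult_0 zvar_eq qpoch_Suc mult_ac)

lemma pcompose_zpoch_Suc: "pcompose ([:0, 1 - qv:] * zpoch k) [:1, qv:] = zpoch (Suc k)"
proof -
  have "pcompose zvar [:1, qv:] = [:qv:] * zvar"
    by (simp add: zvar_eq pcompose_pCons algebra_simps)
  then have "pcompose (zpoch k) [:1, qv:] = (\<Prod>j<k. 1 - smult (qv ^ Suc j) zvar)"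
    by (simp add: zpoch_def qpoch_def pcompose_prod pcompose_diff pcompose_smult pcompose_mult pcompose_1
        poly_const_pow mult.assoc mult.commute)
  moreover have "pcompose [:0, 1 - qv:] [:1, qv:] = 1 - zvar"
    by (simp add: zvar_eq pcompose_pCons one_pCons algebra_simps)
  moreover have "zpoch (Suc k) = (1 - zvar) * (\<Prod>j<k. 1 - smult (qv ^ Suc j) zvar)"
    unfolding zpoch_def qpoch_def prod.lessThan_Suc_shift by (simp add: poly_const_pow mult.commute)
  ultimately show ?thesis
    by (simp only: pcompose_mult)
qed

lemma X_mult_zpoch:
  "smult (qv ^ (k + 1) * (qv - 1)) ([:0, 1:] * zpoch k) = zpoch k - smult (qv ^ (k + 1)) (zpoch k) - zpoch (Suc k)"
  by (simp add: zpoch_Suc zvar_eq algebra_simps smult_add_left)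

lemma L_zpoch_Suc: "qv * L (zpoch (Suc k)) = (1 - qv) * (L ([:0, 1:] * zpoch k) + qpoch qv qv k)"
proof -
  define f where "f = [:0, 1 - qv:] * zpoch k"
  have "L (smult qv (zpoch (Suc k)) - f) = (1 - qv) * qpoch qv qv k"
    using L_functional_equation[of f] unfolding f_def pcompose_zpoch_Suc
    by (simp add: coeff_zpoch_0)
  then have "qv * L (zpoch (Suc k)) - L f = (1 - qv) * qpoch qv qv k"
    by (simp only: moment_functional_diff moment_functional_smult)
  moreover have "L f = (1 - qv) * L ([:0, 1:] * zpoch k)"
    unfolding f_def by (simp flip: moment_functional_smult)
  ultimately show ?thesis
    by (simp add: algebra_simps)
qed

lemma L_zpoch: "L (zpoch k) = (1 - qv) * qpoch qv qv k / (1 - qv ^ (k + 1))"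
proof (induction k)
  case 0
  show ?case
    using qv_neq_1 by (simp add: moment_functional_1 bc_beta_0)
next
  case (Suc k)
  define W where "W = qpoch qv qv k"
  have X: "qv ^ (k + 1) * (qv - 1) * L ([:0, 1:] * zpoch k)
      = L (zpoch k) - qv ^ (k + 1) * L (zpoch k) - L (zpoch (Suc k))"
    using X_mult_zpoch by (metis moment_functional_diff moment_functional_smult)
  have IH: "(1 - qv ^ (k + 1)) * L (zpoch k) = (1 - qv) * W"
    using qv_power_eq_1_iff[of "k + 1"] by (simp add: Suc.IH W_def)
  have "(1 - qv ^ (k + 2)) * L (zpoch (Suc k))
      = L (zpoch (Suc k)) - qv ^ (k + 1) * (qv * L (zpoch (Suc k)))"
    by (simp add: algebra_simps)
  also have "\<dots> = L (zpoch (Suc k)) + qv ^ (k + 1) * (qv - 1) * L ([:0, 1:] * zpoch k)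
      - qv ^ (k + 1) * ((1 - qv) * W)"
    by (simp add: L_zpoch_Suc W_def algebra_simps)
  also have "\<dots> = (1 - qv ^ (k + 1)) * L (zpoch k) - qv ^ (k + 1) * ((1 - qv) * W)"
    unfolding X by (simp add: algebra_simps)
  also have "\<dots> = (1 - qv) * (W * (1 - qv ^ (k + 1)))"
    unfolding IH by (simp add: algebra_simps)
  finally show ?case
    using qv_power_eq_1_iff[of "k + 2"] by (simp add: W_def qpoch_Suc field_simps)
qed

(* U, V, W stand for (1/a; q)_K, (qa; q)_K, (q; q)_K and b for q^K. *)
lemma partial_sum_step_identity:
  fixes q a b U V W c d :: "'a::field"
  assumes nz: "a \<noteq> 0" "W \<noteq> 0" "c \<noteq> 0" "d \<noteq> 0"
    and c: "c = 1 - b * q" and d: "d = (a - 1) * (q * a - 1)"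
  shows "a * (1 - b) * (q - 1) * U * V / (W ^ 2 * d) + U * V * b / W ^ 3 * ((1 - q) * W / c)
    = a * c * (q - 1) * (U * (1 - b / a)) * (V * (1 - b * (q * a))) / ((W * c) ^ 2 * d)"
proof -
  have "a * c * (q - 1) * (U * (1 - b / a)) * (V * (1 - b * (q * a))) / ((W * c) ^ 2 * d)
      = (q - 1) * U * V * ((a - b) * (1 - b * (q * a))) / (W ^ 2 * c * d)"
    using nz by (simp add: field_simps power2_eq_square)
  also have "\<dots> = a * (1 - b) * (q - 1) * U * V / (W ^ 2 * d) + U * V * b / W ^ 3 * ((1 - q) * W / c)"
    using nz apply (simp add: field_simps power2_eq_square power3_eq_cube)
    unfolding c d by algebra
  finally show ?thesis ..
qed

(* P_n has coefficients hahn_coeff (q^n) k in the basis \<phi>_k. With a = q^n kept as a variable,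
   P_(n+1) and P_(n-1) correspond to the contiguous values q a and a / q. *)
definition hahn_coeff :: "qrat \<Rightarrow> nat \<Rightarrow> qrat" where
  "hahn_coeff a k = qpoch (inverse a) qv k * qpoch (qv * a) qv k * qv ^ k / (qpoch qv qv k) ^ 3"

lemma hahn_coeff_0 [simp]: "hahn_coeff a 0 = 1"
  by (simp add: hahn_coeff_def)

lemma hahn_coeff_eq_0: "n < k \<Longrightarrow> hahn_coeff (qv ^ n) k = 0"
  by (simp add: hahn_coeff_def qpoch_inverse_qv_power_eq_0)

lemma Pfam_eq_sum_atMost:
  assumes "n \<le> N"
  shows "Pfam n = (\<Sum>k\<le>N. smult (hahn_coeff (qv ^ n) k) (zpoch k))"
proof -
  have "Pfam n = (\<Sum>k\<le>n. smult (hahn_coeff (qv ^ n) k) (zpoch k))"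
    by (simp add: Pfam_def hahn_coeff_def zpoch_def zvar_def atMost_atLeast0)
  also have "\<dots> = (\<Sum>k\<le>N. smult (hahn_coeff (qv ^ n) k) (zpoch k))"
    using assms by (intro sum.mono_neutral_left) (auto simp: hahn_coeff_eq_0)
  finally show ?thesis .
qed

lemma Pfam_0: "Pfam 0 = 1"
  by (simp add: Pfam_eq_sum_atMost[of 0 0])

lemma sum_hahn_coeff_L_zpoch:
  assumes "a \<noteq> 0" "a \<noteq> 1" "qv * a \<noteq> 1"
  shows "(\<Sum>k<K. hahn_coeff a k * L (zpoch k))
    = a * (1 - qv ^ K) * (qv - 1) * qpoch (inverse a) qv K * qpoch (qv * a) qv K
      / ((qpoch qv qv K) ^ 2 * ((a - 1) * (qv * a - 1)))"
proof (induction K)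
  case (Suc K)
  define U where "U = qpoch (inverse a) qv K"
  define V where "V = qpoch (qv * a) qv K"
  define W where "W = qpoch qv qv K"
  define c where "c = 1 - qv ^ K * qv"
  define d where "d = (a - 1) * (qv * a - 1)"
  have nonzero: "W \<noteq> 0" "c \<noteq> 0" "d \<noteq> 0"
    using assms qpoch_qv_qv_nonzero qv_power_eq_1_iff[of "Suc K"]
    by (auto simp: W_def c_def d_def mult.commute)
  have "(\<Sum>k<Suc K. hahn_coeff a k * L (zpoch k))
      = a * (1 - qv ^ K) * (qv - 1) * U * V / (W ^ 2 * d) + U * V * qv ^ K / W ^ 3 * ((1 - qv) * W / c)"
    unfolding sum.lessThan_Suc Suc.IH
    by (simp add: hahn_coeff_def L_zpoch U_def V_def W_def c_def d_def mult.commute)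
  also have "\<dots> = a * c * (qv - 1) * (U * (1 - qv ^ K / a)) * (V * (1 - qv ^ K * (qv * a)))
      / ((W * c) ^ 2 * d)"
    using assms(1) nonzero by (rule partial_sum_step_identity[OF _ _ _ _ c_def d_def])
  finally show ?case
    by (simp add: U_def V_def W_def c_def d_def qpoch_Suc divide_inverse mult.commute)
qed simp

lemma L_Pfam: "n \<ge> 1 \<Longrightarrow> L (Pfam n) = 0"
proof -
  assume "n \<ge> 1"
  then have "qv ^ n \<noteq> 1" "qv * qv ^ n \<noteq> 1"
    using qv_power_eq_1_iff[of n] qv_power_eq_1_iff[of "Suc n"] by auto
  have "L (Pfam n) = (\<Sum>k<Suc n. hahn_coeff (qv ^ n) k * L (zpoch k))"
    by (simp add: Pfam_eq_sum_atMost[of n n] moment_functional_sum moment_functional_smult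
        lessThan_Suc_atMost)
  also have "\<dots> = qv ^ n * (1 - qv ^ Suc n) * (qv - 1) * qpoch (inverse (qv ^ n)) qv (Suc n)
      * qpoch (qv * qv ^ n) qv (Suc n) / ((qpoch qv qv (Suc n)) ^ 2 * ((qv ^ n - 1) * (qv * qv ^ n - 1)))"
    using qv_nonzero \<open>qv ^ n \<noteq> 1\<close> \<open>qv * qv ^ n \<noteq> 1\<close> by (intro sum_hahn_coeff_L_zpoch) simp_all
  also have "\<dots> = 0"
    by (simp add: qpoch_inverse_qv_power_eq_0)
  finally show ?thesis .
qed

section \<open>Contiguous relations and the three-term recurrence\<close>

definition hahn_E :: "qrat \<Rightarrow> qrat" where
  "hahn_E a = (1 - qv * a ^ 2) * (1 - qv ^ 2 * a ^ 2) * (1 + a)"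

definition hahn_A :: "qrat \<Rightarrow> qrat" where
  "hahn_A a = (1 - qv * a) ^ 3 * (1 + a)"

definition hahn_C :: "qrat \<Rightarrow> qrat" where
  "hahn_C a = - qv * a * (1 - a) ^ 2 * (1 - qv ^ 2 * a ^ 2)"

(* Coefficients of (z - 1) \<Sigma> c_k \<phi>_k in the basis \<phi>_k, from z \<phi>_k = q^-k (\<phi>_k - \<phi>_(k+1)). *)
definition zvar_minus_1_coeff :: "(nat \<Rightarrow> qrat) \<Rightarrow> nat \<Rightarrow> qrat" where
  "zvar_minus_1_coeff c k
     = (inverse (qv ^ k) - 1) * c k - (if k = 0 then 0 else qv * inverse (qv ^ k) * c (k - 1))"

lemma contiguous_identity_1:
  fixes q a ia s E A C :: "'a::field"
  assumes ia: "ia = inverse a" and s: "s = inverse q" and nz: "q \<noteq> 0" "a \<noteq> 0" "1 - q \<noteq> 0"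
    and E: "E = (1 - q * a ^ 2) * (1 - q ^ 2 * a ^ 2) * (1 + a)" and A: "A = (1 - q * a) ^ 3 * (1 + a)"
    and C: "C = - q * a * (1 - a) ^ 2 * (1 - q ^ 2 * a ^ 2)"
  shows "E * ((s - 1) * ((1 - ia) * (1 - q * a) * q / (1 - q) ^ 3) - q * s * 1)
    = A * ((1 - ia / q) * (1 - q ^ 2 * a) * q / (1 - q) ^ 3)
      - (A + C) * ((1 - ia) * (1 - q * a) * q / (1 - q) ^ 3)
      + C * ((1 - q * ia) * (1 - a) * q / (1 - q) ^ 3)"
proof -
  define M where "M = (1 - q) ^ 3 * a * q ^ 2"
  have M: "M \<noteq> 0"
    using nz by (simp add: M_def)
  have t1: "M * ((s - 1) * ((1 - ia) * (1 - q * a) * q / (1 - q) ^ 3)) = (1 - q) * q * ((a - 1) * (1 - q * a) * q)"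
    using nz by (simp add: M_def ia s field_simps; algebra)
  have t2: "M * (q * s * 1) = q ^ 2 * (1 - q) ^ 3 * a"
    using nz by (simp add: M_def ia s field_simps)
  have t3: "M * ((1 - ia / q) * (1 - q ^ 2 * a) * q / (1 - q) ^ 3) = q * ((q * a - 1) * (1 - q ^ 2 * a) * q)"
    using nz by (simp add: M_def ia s field_simps; algebra)
  have t4: "M * ((1 - ia) * (1 - q * a) * q / (1 - q) ^ 3) = q ^ 2 * ((a - 1) * (1 - q * a) * q)"
    using nz by (simp add: M_def ia s field_simps; algebra)
  have t5: "M * ((1 - q * ia) * (1 - a) * q / (1 - q) ^ 3) = q ^ 2 * ((a - q) * (1 - a) * q)"
    using nz by (simp add: M_def ia s field_simps; algebra)
  have "M * (E * ((s - 1) * ((1 - ia) * (1 - q * a) * q / (1 - q) ^ 3) - q * s * 1))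
      = E * (M * ((s - 1) * ((1 - ia) * (1 - q * a) * q / (1 - q) ^ 3)) - M * (q * s * 1))"
    by (simp add: algebra_simps)
  also have "\<dots> = A * (M * ((1 - ia / q) * (1 - q ^ 2 * a) * q / (1 - q) ^ 3))
      - (A + C) * (M * ((1 - ia) * (1 - q * a) * q / (1 - q) ^ 3))
      + C * (M * ((1 - q * ia) * (1 - a) * q / (1 - q) ^ 3))"
    unfolding t1 t2 t3 t4 t5 E A C by algebra
  also have "\<dots> = M * (A * ((1 - ia / q) * (1 - q ^ 2 * a) * q / (1 - q) ^ 3)
      - (A + C) * ((1 - ia) * (1 - q * a) * q / (1 - q) ^ 3)
      + C * ((1 - q * ia) * (1 - a) * q / (1 - q) ^ 3))"
    by (simp add: algebra_simps)
  finally show ?thesis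
    using M by simp
qed

(* With b = q^j, the four bracketed terms are hahn_coeff at a, q a, a / q with index j + 2 and
   q * hahn_coeff a (j + 1), each divided by their common factor (hahn_coeff_Suc_Suc_factorization). *)
lemma contiguous_identity_2:
  fixes q a ia b s E A C :: "'a::field"
  assumes ia: "ia = inverse a" and s: "s = inverse (q ^ 2 * b)"
    and nz: "q \<noteq> 0" "a \<noteq> 0" "b \<noteq> 0" "1 - q ^ 2 * b \<noteq> 0"
    and E: "E = (1 - q * a ^ 2) * (1 - q ^ 2 * a ^ 2) * (1 + a)" and A: "A = (1 - q * a) ^ 3 * (1 + a)"
    and C: "C = - q * a * (1 - a) ^ 2 * (1 - q ^ 2 * a ^ 2)"
  shows "E * ((s - 1) * ((1 - ia) * (1 - q * b * ia) * (1 - q * a) * (1 - q ^ 2 * a * b) / (1 - q ^ 2 * b) ^ 3)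
        - s * ((1 - ia) * (1 - q * a)))
    = A * ((1 - ia / q) * (1 - ia) * (1 - q ^ 2 * a * b) * (1 - q ^ 3 * a * b) / (1 - q ^ 2 * b) ^ 3)
      - (A + C) * ((1 - ia) * (1 - q * b * ia) * (1 - q * a) * (1 - q ^ 2 * a * b) / (1 - q ^ 2 * b) ^ 3)
      + C * ((1 - q * b * ia) * (1 - q ^ 2 * b * ia) * (1 - a) * (1 - q * a) / (1 - q ^ 2 * b) ^ 3)"
proof -
  define M where "M = (1 - q ^ 2 * b) ^ 3 * a ^ 2 * q ^ 3 * b"
  have M: "M \<noteq> 0"
    using nz by (simp add: M_def)
  have t1: "M * ((s - 1) * ((1 - ia) * (1 - q * b * ia) * (1 - q * a) * (1 - q ^ 2 * a * b) / (1 - q ^ 2 * b) ^ 3))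
      = (1 - q ^ 2 * b) * q * ((a - 1) * (a - q * b) * (1 - q * a) * (1 - q ^ 2 * a * b))"
    using nz by (simp add: M_def ia s field_simps; algebra)
  have t2: "M * (s * ((1 - ia) * (1 - q * a))) = q * (1 - q ^ 2 * b) ^ 3 * a * ((a - 1) * (1 - q * a))"
    using nz by (simp add: M_def ia s field_simps; algebra)
  have t3: "M * ((1 - ia / q) * (1 - ia) * (1 - q ^ 2 * a * b) * (1 - q ^ 3 * a * b) / (1 - q ^ 2 * b) ^ 3)
      = q ^ 2 * b * ((q * a - 1) * (a - 1) * (1 - q ^ 2 * a * b) * (1 - q ^ 3 * a * b))"
    using nz by (simp add: M_def ia s field_simps; algebra)
  have t4: "M * ((1 - ia) * (1 - q * b * ia) * (1 - q * a) * (1 - q ^ 2 * a * b) / (1 - q ^ 2 * b) ^ 3)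
      = q ^ 3 * b * ((a - 1) * (a - q * b) * (1 - q * a) * (1 - q ^ 2 * a * b))"
    using nz by (simp add: M_def ia s field_simps; algebra)
  have t5: "M * ((1 - q * b * ia) * (1 - q ^ 2 * b * ia) * (1 - a) * (1 - q * a) / (1 - q ^ 2 * b) ^ 3)
      = q ^ 3 * b * ((a - q * b) * (a - q ^ 2 * b) * (1 - a) * (1 - q * a))"
    using nz by (simp add: M_def ia s field_simps; algebra)
  have "M * (E * ((s - 1) * ((1 - ia) * (1 - q * b * ia) * (1 - q * a) * (1 - q ^ 2 * a * b) / (1 - q ^ 2 * b) ^ 3)
        - s * ((1 - ia) * (1 - q * a))))
      = E * (M * ((s - 1) * ((1 - ia) * (1 - q * b * ia) * (1 - q * a) * (1 - q ^ 2 * a * b) / (1 - q ^ 2 * b) ^ 3))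
        - M * (s * ((1 - ia) * (1 - q * a))))"
    by (simp add: algebra_simps)
  also have "\<dots> = A * (M * ((1 - ia / q) * (1 - ia) * (1 - q ^ 2 * a * b) * (1 - q ^ 3 * a * b) / (1 - q ^ 2 * b) ^ 3))
      - (A + C) * (M * ((1 - ia) * (1 - q * b * ia) * (1 - q * a) * (1 - q ^ 2 * a * b) / (1 - q ^ 2 * b) ^ 3))
      + C * (M * ((1 - q * b * ia) * (1 - q ^ 2 * b * ia) * (1 - a) * (1 - q * a) / (1 - q ^ 2 * b) ^ 3))"
    unfolding t1 t2 t3 t4 t5 E A C by algebra
  also have "\<dots> = M * (A * ((1 - ia / q) * (1 - ia) * (1 - q ^ 2 * a * b) * (1 - q ^ 3 * a * b) / (1 - q ^ 2 * b) ^ 3)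
      - (A + C) * ((1 - ia) * (1 - q * b * ia) * (1 - q * a) * (1 - q ^ 2 * a * b) / (1 - q ^ 2 * b) ^ 3)
      + C * ((1 - q * b * ia) * (1 - q ^ 2 * b * ia) * (1 - a) * (1 - q * a) / (1 - q ^ 2 * b) ^ 3))"
    by (simp add: algebra_simps)
  finally show ?thesis
    using M by simp
qed

lemma scale_contiguous_identity:
  fixes E A C K s Z1 Z2 Z3 Z4 :: "'a::comm_ring_1"
  assumes "E * ((s - 1) * Z1 - s * Z2) = A * Z3 - (A + C) * Z1 + C * Z4"
  shows "E * ((s - 1) * (K * Z1) - s * (K * Z2)) = A * (K * Z3) - (A + C) * (K * Z1) + C * (K * Z4)"
proof -
  have "E * ((s - 1) * (K * Z1) - s * (K * Z2)) = K * (E * ((s - 1) * Z1 - s * Z2))"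
    by (simp add: algebra_simps)
  also have "\<dots> = A * (K * Z3) - (A + C) * (K * Z1) + C * (K * Z4)"
    by (simp only: assms) (simp add: algebra_simps)
  finally show ?thesis .
qed

lemma hahn_coeff_1: "hahn_coeff a 1 = (1 - inverse a) * (1 - qv * a) * qv / (1 - qv) ^ 3"
  by (simp add: hahn_coeff_def qpoch_def)

lemma hahn_coeff_contiguous_1:
  assumes "a \<noteq> 0"
  shows "hahn_E a * zvar_minus_1_coeff (hahn_coeff a) 1
    = hahn_A a * hahn_coeff (qv * a) 1 - (hahn_A a + hahn_C a) * hahn_coeff a 1
      + hahn_C a * hahn_coeff (a / qv) 1"
proof -
  have inv: "inverse (qv * a) = inverse a / qv" "inverse (a / qv) = qv * inverse a"
    using qv_nonzero assms by (simp_all add: field_simps)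
  have "hahn_coeff (qv * a) 1 = (1 - inverse a / qv) * (1 - qv ^ 2 * a) * qv / (1 - qv) ^ 3"
    unfolding hahn_coeff_1 inv by (simp add: power2_eq_square mult.assoc)
  moreover have "hahn_coeff (a / qv) 1 = (1 - qv * inverse a) * (1 - a) * qv / (1 - qv) ^ 3"
    unfolding hahn_coeff_1 inv using qv_nonzero by simp
  moreover have "zvar_minus_1_coeff (hahn_coeff a) 1 = (inverse qv - 1) * hahn_coeff a 1 - qv * inverse qv * 1"
    by (simp add: zvar_minus_1_coeff_def)
  ultimately show ?thesis
    using qv_nonzero qv_neq_1 assms
    by (simp only: hahn_coeff_1)
      (rule contiguous_identity_1[OF refl refl _ _ _ hahn_E_def hahn_A_def hahn_C_def], simp_all)
qed

lemma hahn_coeff_Suc_Suc_factorization: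
  fixes a :: qrat and j :: nat
  defines "ia \<equiv> inverse a" and "b \<equiv> qv ^ j"
    and "K \<equiv> qpoch (qv * inverse a) qv j * qpoch (qv * (qv * a)) qv j * (qv ^ 2 * qv ^ j)
      / ((qpoch qv qv j) ^ 3 * (1 - qv * qv ^ j) ^ 3)"
  assumes "a \<noteq> 0"
  shows "hahn_coeff a (Suc (Suc j))
      = K * ((1 - ia) * (1 - qv * b * ia) * (1 - qv * a) * (1 - qv ^ 2 * a * b) / (1 - qv ^ 2 * b) ^ 3)"
    and "hahn_coeff (qv * a) (Suc (Suc j))
      = K * ((1 - ia / qv) * (1 - ia) * (1 - qv ^ 2 * a * b) * (1 - qv ^ 3 * a * b) / (1 - qv ^ 2 * b) ^ 3)"
    and "hahn_coeff (a / qv) (Suc (Suc j))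
      = K * ((1 - qv * b * ia) * (1 - qv ^ 2 * b * ia) * (1 - a) * (1 - qv * a) / (1 - qv ^ 2 * b) ^ 3)"
    and "qv * hahn_coeff a (Suc j) = K * ((1 - ia) * (1 - qv * a))"
proof -
  define Y where "Y = qpoch (qv * ia) qv j"
  define Z where "Z = qpoch (qv * (qv * a)) qv j"
  define W where "W = qpoch qv qv j"
  have K: "K = Y * Z * (qv ^ 2 * b) / (W ^ 3 * (1 - qv * b) ^ 3)"
    by (simp add: K_def Y_def Z_def W_def ia_def b_def)
  have inv: "inverse (qv * a) = ia / qv" "inverse (a / qv) = qv * ia" "qv * (ia / qv) = ia"
    "qv * (a / qv) = a"
    using qv_nonzero assms by (simp_all add: ia_def field_simps)
  have U: "qpoch (inverse a) qv (Suc (Suc j)) = (1 - ia) * Y * (1 - b * (qv * ia))"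
    "qpoch (inverse a) qv (Suc j) = (1 - ia) * Y"
    "qpoch (inverse (qv * a)) qv (Suc (Suc j)) = (1 - ia / qv) * (1 - ia) * Y"
    "qpoch (inverse (a / qv)) qv (Suc (Suc j)) = Y * (1 - b * (qv * ia)) * (1 - qv * b * (qv * ia))"
    unfolding inv qpoch_Suc_Suc_shift2[of "ia / qv"] qpoch_Suc_Suc[of "qv * ia"]
      qpoch_Suc_Suc_shift[of "inverse a"] qpoch_Suc_shift[of "inverse a"]
    by (simp_all add: Y_def ia_def b_def inv qpoch_Suc)
  have V: "qpoch (qv * a) qv (Suc (Suc j)) = (1 - qv * a) * Z * (1 - b * (qv * (qv * a)))"
    "qpoch (qv * a) qv (Suc j) = (1 - qv * a) * Z"
    "qpoch (qv * (qv * a)) qv (Suc (Suc j)) = Z * (1 - b * (qv * (qv * a))) * (1 - qv * b * (qv * (qv * a)))"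
    "qpoch (qv * (a / qv)) qv (Suc (Suc j)) = (1 - a) * (1 - qv * a) * Z"
    unfolding qpoch_Suc_Suc_shift[of "qv * a"] qpoch_Suc_shift[of "qv * a"]
      qpoch_Suc_Suc[of "qv * (qv * a)"] inv(4) qpoch_Suc_Suc_shift2[of a]
    by (simp_all add: Z_def b_def qpoch_Suc)
  have W: "qpoch qv qv (Suc (Suc j)) = W * (1 - b * qv) * (1 - qv * b * qv)"
    "qpoch qv qv (Suc j) = W * (1 - b * qv)"
    by (simp_all add: qpoch_Suc W_def b_def)
  have pow: "qv ^ Suc (Suc j) = qv ^ 2 * b" "qv ^ Suc j = qv * b"
    by (simp_all add: b_def power2_eq_square)
  show "hahn_coeff a (Suc (Suc j))
      = K * ((1 - ia) * (1 - qv * b * ia) * (1 - qv * a) * (1 - qv ^ 2 * a * b) / (1 - qv ^ 2 * b) ^ 3)"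
    unfolding hahn_coeff_def W pow U V K by (simp only: times_divide_times_eq)
      (simp add: mult_ac power2_eq_square power3_eq_cube power_mult_distrib)
  show "hahn_coeff (qv * a) (Suc (Suc j))
      = K * ((1 - ia / qv) * (1 - ia) * (1 - qv ^ 2 * a * b) * (1 - qv ^ 3 * a * b) / (1 - qv ^ 2 * b) ^ 3)"
    unfolding hahn_coeff_def W pow U V K by (simp only: times_divide_times_eq)
      (simp add: mult_ac power2_eq_square power3_eq_cube power_mult_distrib)
  show "hahn_coeff (a / qv) (Suc (Suc j))
      = K * ((1 - qv * b * ia) * (1 - qv ^ 2 * b * ia) * (1 - a) * (1 - qv * a) / (1 - qv ^ 2 * b) ^ 3)"
    unfolding hahn_coeff_def W pow U V K by (simp only: times_divide_times_eq)
      (simp add: mult_ac power2_eq_square power3_eq_cube power_mult_distrib)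
  show "qv * hahn_coeff a (Suc j) = K * ((1 - ia) * (1 - qv * a))"
    unfolding hahn_coeff_def W pow U V K by (simp only: times_divide_eq_left times_divide_eq_right)
      (simp add: mult_ac power2_eq_square power_mult_distrib)
qed

lemma hahn_coeff_contiguous_Suc_Suc:
  assumes "a \<noteq> 0"
  shows "hahn_E a * zvar_minus_1_coeff (hahn_coeff a) (Suc (Suc j))
    = hahn_A a * hahn_coeff (qv * a) (Suc (Suc j)) - (hahn_A a + hahn_C a) * hahn_coeff a (Suc (Suc j))
      + hahn_C a * hahn_coeff (a / qv) (Suc (Suc j))"
proof -
  have nonzero: "qv ^ j \<noteq> 0" "1 - qv ^ 2 * qv ^ j \<noteq> 0"
    using qv_nonzero qv_power_eq_1_iff[of "Suc (Suc j)"] by (auto simp: power2_eq_square mult_ac)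
  have "zvar_minus_1_coeff (hahn_coeff a) (Suc (Suc j))
      = (inverse (qv ^ 2 * qv ^ j) - 1) * hahn_coeff a (Suc (Suc j))
        - inverse (qv ^ 2 * qv ^ j) * (qv * hahn_coeff a (Suc j))"
    by (simp add: zvar_minus_1_coeff_def power2_eq_square mult_ac)
  then show ?thesis
    unfolding hahn_coeff_Suc_Suc_factorization[OF assms]
    by (simp only:) (rule scale_contiguous_identity[OF contiguous_identity_2[OF refl refl qv_nonzero
          assms nonzero hahn_E_def hahn_A_def hahn_C_def]])
qed

lemma hahn_coeff_contiguous:
  assumes "a \<noteq> 0"
  shows "hahn_E a * zvar_minus_1_coeff (hahn_coeff a) k
    = hahn_A a * hahn_coeff (qv * a) k - (hahn_A a + hahn_C a) * hahn_coeff a k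
      + hahn_C a * hahn_coeff (a / qv) k"
proof (cases k)
  case 0
  then show ?thesis by (simp add: zvar_minus_1_coeff_def algebra_simps)
next
  case (Suc j)
  then show ?thesis
    using assms hahn_coeff_contiguous_1 hahn_coeff_contiguous_Suc_Suc
    by (cases j) simp_all
qed

lemma zvar_mult_zpoch: "smult (qv ^ k) (zvar * zpoch k) = zpoch k - zpoch (Suc k)"
  by (simp add: zpoch_Suc algebra_simps)

lemma zvar_minus_1_mult_smult_zpoch:
  "(zvar - 1) * smult c (zpoch k)
     = smult (c * (inverse (qv ^ k) - 1)) (zpoch k) - smult (c * inverse (qv ^ k)) (zpoch (Suc k))"
proof -
  have "(zvar - 1) * smult c (zpoch k) = smult c (zvar * zpoch k) - smult c (zpoch k)"
    by (simp add: left_diff_distrib smult_diff_right)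
  also have "zvar * zpoch k = smult (inverse (qv ^ k)) (zpoch k - zpoch (Suc k))"
    using qv_nonzero by (simp flip: zvar_mult_zpoch)
  finally show ?thesis
    by (simp add: smult_diff_right smult_diff_left algebra_simps)
qed

lemma zvar_minus_1_mult_sum:
  "(zvar - 1) * (\<Sum>k\<le>N. smult (c k) (zpoch k))
     = (\<Sum>k\<le>N. smult (zvar_minus_1_coeff c k) (zpoch k)) - smult (c N * inverse (qv ^ N)) (zpoch (Suc N))"
proof (induction N)
  case 0
  show ?case
    by (simp add: zvar_minus_1_mult_smult_zpoch zvar_minus_1_coeff_def zpoch_Suc
        smult_diff_right)
next
  case (Suc N)
  have "qv * inverse (qv ^ Suc N) = inverse (qv ^ N)"
    using qv_nonzero by (simp add: field_simps)
  then have "zvar_minus_1_coeff c (Suc N) = c (Suc N) * (inverse (qv ^ Suc N) - 1) - c N * inverse (qv ^ N)"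
    unfolding zvar_minus_1_coeff_def by (simp add: mult_ac)
  then have "smult (zvar_minus_1_coeff c (Suc N)) (zpoch (Suc N))
      = smult (c (Suc N) * (inverse (qv ^ Suc N) - 1)) (zpoch (Suc N)) - smult (c N * inverse (qv ^ N)) (zpoch (Suc N))"
    by (simp add: smult_diff_left)
  then show ?case
    unfolding sum.atMost_Suc distrib_left Suc.IH zvar_minus_1_mult_smult_zpoch
    by (simp add: algebra_simps)
qed

(* At n = 0 the index n - 1 truncates to 0, but then hahn_C 1 = 0. *)
lemma hahn_C_mult_hahn_coeff_down:
  "hahn_C (qv ^ n) * hahn_coeff (qv ^ n / qv) k = hahn_C (qv ^ n) * hahn_coeff (qv ^ (n - 1)) k"
  using qv_nonzero by (cases n) (simp_all add: hahn_C_def)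

lemma Pfam_contiguous:
  "smult (hahn_E (qv ^ n)) ((zvar - 1) * Pfam n)
     = smult (hahn_A (qv ^ n)) (Pfam (Suc n)) - smult (hahn_A (qv ^ n) + hahn_C (qv ^ n)) (Pfam n)
       + smult (hahn_C (qv ^ n)) (Pfam (n - 1))"
proof -
  let ?a = "qv ^ n"
  let ?P = "\<lambda>c. \<Sum>k\<le>Suc n. smult (c k) (zpoch k)"
  have Pfam: "\<And>m. m \<le> Suc n \<Longrightarrow> Pfam m = ?P (hahn_coeff (qv ^ m))"
    by (rule Pfam_eq_sum_atMost)
  have "(zvar - 1) * Pfam n = ?P (zvar_minus_1_coeff (hahn_coeff ?a))"
    unfolding Pfam[of n, OF le_SucI[OF order.refl]] zvar_minus_1_mult_sum by (simp add: hahn_coeff_eq_0)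
  then have "smult (hahn_E ?a) ((zvar - 1) * Pfam n)
      = ?P (\<lambda>k. hahn_E ?a * zvar_minus_1_coeff (hahn_coeff ?a) k)"
    by (simp only: smult_sum_right smult_smult)
  also have "\<dots> = ?P (\<lambda>k. hahn_A ?a * hahn_coeff (qv * ?a) k - (hahn_A ?a + hahn_C ?a) * hahn_coeff ?a k
          + hahn_C ?a * hahn_coeff (qv ^ (n - 1)) k)"
    using qv_nonzero
    by (simp only: hahn_coeff_contiguous power_not_zero hahn_C_mult_hahn_coeff_down not_False_eq_True)
  also have "\<dots> = smult (hahn_A ?a) (?P (hahn_coeff (qv * ?a))) - smult (hahn_A ?a + hahn_C ?a) (?P (hahn_coeff ?a))
      + smult (hahn_C ?a) (?P (hahn_coeff (qv ^ (n - 1))))"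
    by (simp only: smult_add_left smult_diff_left sum.distrib sum_subtractf smult_sum_right smult_smult)
  also have "\<dots> = smult (hahn_A ?a) (Pfam (Suc n)) - smult (hahn_A ?a + hahn_C ?a) (Pfam n)
      + smult (hahn_C ?a) (Pfam (n - 1))"
    by (simp add: Pfam)
  finally show ?thesis .
qed

lemma hahn_E_qv_power_nonzero: "hahn_E (qv ^ n) \<noteq> 0"
  and hahn_A_qv_power_nonzero: "hahn_A (qv ^ n) \<noteq> 0"
  and hahn_C_qv_power_nonzero: "n \<ge> 1 \<Longrightarrow> hahn_C (qv ^ n) \<noteq> 0"
proof -
  have "1 + qv ^ n \<noteq> 0"
    using qv_power_neq_minus_1[of n] by (metis add.commute add_eq_0_iff)
  moreover have "qv * (qv ^ n) ^ 2 \<noteq> 1" "qv ^ 2 * (qv ^ n) ^ 2 \<noteq> 1" "qv * qv ^ n \<noteq> 1"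
    using qv_power_eq_1_iff[of "Suc (2 * n)"] qv_power_eq_1_iff[of "Suc (Suc (2 * n))"]
      qv_power_eq_1_iff[of "Suc n"]
    by (simp_all add: power_mult power2_eq_square power_mult_distrib)
  ultimately show "hahn_E (qv ^ n) \<noteq> 0" "hahn_A (qv ^ n) \<noteq> 0"
    by (simp_all add: hahn_E_def hahn_A_def)
  show "hahn_C (qv ^ n) \<noteq> 0" if "n \<ge> 1"
    using that \<open>qv ^ 2 * (qv ^ n) ^ 2 \<noteq> 1\<close> qv_nonzero qv_power_eq_1_iff[of n]
    by (simp add: hahn_C_def)
qed

definition Pfam_succ_coeff :: "nat \<Rightarrow> qrat" where
  "Pfam_succ_coeff n = hahn_A (qv ^ n) / (hahn_E (qv ^ n) * (qv * (qv - 1)))"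

definition Pfam_same_coeff :: "nat \<Rightarrow> qrat" where
  "Pfam_same_coeff n = - (hahn_A (qv ^ n) + hahn_C (qv ^ n)) / (hahn_E (qv ^ n) * (qv * (qv - 1))) - 1 / qv"

definition Pfam_pred_coeff :: "nat \<Rightarrow> qrat" where
  "Pfam_pred_coeff n = hahn_C (qv ^ n) / (hahn_E (qv ^ n) * (qv * (qv - 1)))"

lemma Pfam_three_term_recurrence:
  "[:0, 1:] * Pfam n = smult (Pfam_succ_coeff n) (Pfam (Suc n)) + smult (Pfam_same_coeff n) (Pfam n)
     + smult (Pfam_pred_coeff n) (Pfam (n - 1))"
proof -
  define E A C where "E = hahn_E (qv ^ n)" and "A = hahn_A (qv ^ n)" and "C = hahn_C (qv ^ n)"
  define r where "r = qv * (qv - 1)"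
  have "E * r \<noteq> 0"
    using hahn_E_qv_power_nonzero qv_nonzero qv_neq_1 by (simp add: E_def r_def)
  then have coeffs: "E * r * Pfam_succ_coeff n = A" "E * r * Pfam_pred_coeff n = C"
    "E * r * Pfam_same_coeff n = - (A + C) - E * (qv - 1)"
    using qv_nonzero
    by (simp_all add: Pfam_succ_coeff_def Pfam_same_coeff_def Pfam_pred_coeff_def E_def A_def C_def r_def
        field_simps)
  have "zvar - 1 = [:qv - 1:] + smult r [:0, 1:]"
    by (simp add: zvar_eq r_def one_pCons algebra_simps)
  then have "smult (E * r) ([:0, 1:] * Pfam n) = smult E ((zvar - 1) * Pfam n) - smult (E * (qv - 1)) (Pfam n)"
    by (simp add: distrib_right smult_add_right)
  also have "\<dots> = smult A (Pfam (Suc n)) - smult (A + C) (Pfam n) + smult C (Pfam (n - 1))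
      - smult (E * (qv - 1)) (Pfam n)"
    by (simp only: E_def A_def C_def Pfam_contiguous)
  also have "\<dots> = smult (E * r) (smult (Pfam_succ_coeff n) (Pfam (Suc n)) + smult (Pfam_same_coeff n) (Pfam n)
      + smult (Pfam_pred_coeff n) (Pfam (n - 1)))"
    by (simp only: smult_add_right smult_smult coeffs) (simp add: algebra_simps smult_add_left smult_diff_left)
  finally show ?thesis
    using \<open>E * r \<noteq> 0\<close> by (rule smult_cancel[rotated])
qed

theorem mainTheorem1:
  shows "is_moment_sequence bc_beta Pfam"
proof (rule is_moment_sequence_three_term)
  show "Pfam_succ_coeff n \<noteq> 0" for n
    using hahn_A_qv_power_nonzero hahn_E_qv_power_nonzero qv_nonzero qv_neq_1
    by (simp add: Pfam_succ_coeff_def)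
  show "Pfam_pred_coeff n \<noteq> 0" if "n \<ge> 1" for n
    using that hahn_C_qv_power_nonzero hahn_E_qv_power_nonzero qv_nonzero qv_neq_1
    by (simp add: Pfam_pred_coeff_def)
qed (use bc_beta_0 Pfam_0 L_Pfam Pfam_three_term_recurrence in auto)

end
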